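(* Let $\Gamma$ be a Carleson curve and $t_0\in\Gamma$. Suppose $w:\Gamma\setminus\{t_0\}\to(0,\infty)$ is continuous and $W_{t_0}w$ is regular. Let $\varepsilon>0$ and $0<\delta<d_{t_0}$. Then there exist constants $C_1,C_2>0$ (depending on $\varepsilon,\delta,w$) such that \[ \frac{w(t)}{w(\tau)}\le C_1\left|\frac{t-t_0}{\tau-t_0}\right|^{\beta(W_{t_0}w)+\varepsilon} \] for all $t\in\Gamma\setminus\omega(t_0,\delta)$ and all $\tau\in\omega(t_0,\delta)$, and \[ \frac{w(t)}{w(\tau)}\le C_2\left|\frac{t-t_0}{\tau-t_0}\right|^{\alpha(W_{t_0}w)-\varepsilon} \] for all $t\in\omega(t_0,\delta)$ and all $\tau\in\Gamma\setminus\omega(t_0,\delta)$.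
   Context: $\Gamma$ is a simple (homeomorphic to a segment or a circle) rectifiable curve in $\mathbb{C}$ with arc-length measure; it is Carleson if $\sup_{t\in\Gamma}\sup_{\varepsilon>0}|\{\tau\in\Gamma:|\tau-t|<\varepsilon\}|/\varepsilon<\infty$. $d_{t_0}:=\max_{\tau\in\Gamma}|\tau-t_0|$. $\omega(t_0,\delta)$ denotes the open arc of $\Gamma$ containing $t_0$ whose endpoints lie on the circle $\{\tau\in\mathbb{C}:|\tau-t_0|=\delta\}$. For continuous $\psi:\Gamma\setminus\{t_0\}\to(0,\infty)$ define $(W_{t_0}\psi)(x):=\sup_{0<R\le d_{t_0}}\big(\max_{|\tau-t_0|=xR}\psi(\tau)/\min_{|\tau-t_0|=R}\psi(\tau)\big)$ for $x\in(0,1]$ and $(W_{t_0}\psi)(x):=\sup_{0<R\le d_{t_0}}\big(\max_{|\tau-t_0|=R}\psi(\tau)/\min_{|\tau-t_0|=x^{-1}R}\psi(\tau)\big)$ for $x\in[1,\infty)$, with max/min over $\tau\in\Gamma$; this function is submultiplicative. A function $\varrho:(0,\infty)\to(0,\infty]$ is regular if it is bounded above in a neighborhood of $1$; for a regular submultiplicative $\varrho$, $\alpha(\varrho):=\sup_{x\in(0,1)}\frac{\log\varrho(x)}{\log x}$ and $\beta(\varrho):=\inf_{x\in(1,\infty)}\frac{\log\varrho(x)}{\log x}$. *)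

theory Defs
  imports "HOL-Analysis.Analysis"
begin

definition polygonal_sums :: "(real \<Rightarrow> complex) \<Rightarrow> real \<Rightarrow> real \<Rightarrow> real set" where
  "polygonal_sums g a b =
     {\<Sum>i<n. cmod (g (p (Suc i)) - g (p i)) | p n.
        p 0 = a \<and> p n = b \<and> (\<forall>i<n. p i \<le> p (Suc i))}"

definition rectifiable_path :: "(real \<Rightarrow> complex) \<Rightarrow> bool" where
  "rectifiable_path g \<longleftrightarrow> path g \<and> bdd_above (polygonal_sums g 0 1)"

definition arclen :: "(real \<Rightarrow> complex) \<Rightarrow> real \<Rightarrow> real" where
  "arclen g u = (if u \<le> 0 then 0 else Sup (polygonal_sums g 0 (min u 1)))"

text \<open>Arc-length measure on the curve, as push-forward of the Lebesgue-Stieltjes measure of arclen.\<close>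
definition arc_measure :: "(real \<Rightarrow> complex) \<Rightarrow> complex set \<Rightarrow> ennreal" where
  "arc_measure g A = emeasure (interval_measure (arclen g)) {u \<in> {0..1}. g u \<in> A}"

definition carleson_curve :: "(real \<Rightarrow> complex) \<Rightarrow> bool" where
  "carleson_curve g \<longleftrightarrow> simple_path g \<and> rectifiable_path g \<and>
     (\<exists>C::real. \<forall>t\<in>path_image g. \<forall>\<epsilon>>0.
        arc_measure g {\<tau> \<in> path_image g. cmod (\<tau> - t) < \<epsilon>} \<le> ennreal (C * \<epsilon>))"

definition dmax :: "complex set \<Rightarrow> complex \<Rightarrow> real" where
  "dmax \<Gamma> t0 = Sup ((\<lambda>\<tau>. cmod (\<tau> - t0)) ` \<Gamma>)"

definition omega_arc :: "complex set \<Rightarrow> complex \<Rightarrow> real \<Rightarrow> complex set" where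
  "omega_arc \<Gamma> t0 \<delta> = connected_component_set {\<tau> \<in> \<Gamma>. cmod (\<tau> - t0) < \<delta>} t0"

definition circ_pts :: "complex set \<Rightarrow> complex \<Rightarrow> real \<Rightarrow> complex set" where
  "circ_pts \<Gamma> t0 r = {\<tau> \<in> \<Gamma>. cmod (\<tau> - t0) = r}"

definition Wfun :: "complex set \<Rightarrow> complex \<Rightarrow> (complex \<Rightarrow> real) \<Rightarrow> real \<Rightarrow> ereal" where
  "Wfun \<Gamma> t0 \<psi> x =
     (if x \<le> 1 then
        (SUP R\<in>{0<..dmax \<Gamma> t0}.
           ereal (Sup (\<psi> ` circ_pts \<Gamma> t0 (x * R)) / Inf (\<psi> ` circ_pts \<Gamma> t0 R)))
      else
        (SUP R\<in>{0<..dmax \<Gamma> t0}.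
           ereal (Sup (\<psi> ` circ_pts \<Gamma> t0 R) / Inf (\<psi> ` circ_pts \<Gamma> t0 (R / x)))))"

definition regular_fun :: "(real \<Rightarrow> ereal) \<Rightarrow> bool" where
  "regular_fun \<rho> \<longleftrightarrow> (\<exists>\<eta>>0. \<exists>M::real. \<forall>x. 0 < x \<and> \<bar>x - 1\<bar> < \<eta> \<longrightarrow> \<rho> x \<le> ereal M)"

text \<open>Indices; log oo is taken as oo (irrelevant for regular submultiplicative functions, which are finite).\<close>
definition alpha_idx :: "(real \<Rightarrow> ereal) \<Rightarrow> ereal" where
  "alpha_idx \<rho> = (SUP x\<in>{0<..<1}.
     (if \<rho> x = \<infinity> then -\<infinity> else ereal (ln (real_of_ereal (\<rho> x)) / ln x)))"

definition beta_idx :: "(real \<Rightarrow> ereal) \<Rightarrow> ereal" where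
  "beta_idx \<rho> = (INF x\<in>{1<..}.
     (if \<rho> x = \<infinity> then \<infinity> else ereal (ln (real_of_ereal (\<rho> x)) / ln x)))"

end

theory Submission
  imports Defs
begin

text \<open>
  Write \<open>S(r)\<close> and \<open>I(r)\<close> for the maximum and minimum of \<open>w\<close> on the circle of radius \<open>r\<close>
  about \<open>t0\<close>. The relation "\<open>S(x v) / I(v) \<le> K\<close> for all admissible \<open>v\<close>" is submultiplicative
  in \<open>x\<close>, because such a ratio factors through an intermediate circle. Hence boundedness near
  \<open>x = 1\<close> (regularity) spreads, via \<open>n\<close>-th roots, to every compact subinterval of \<open>(0, \<infinity>)\<close>.
  The definition of the indices yields \<open>x1 > 1\<close> with \<open>W(x1) < x1 powr (\<beta> + \<epsilon>)\<close> and \<open>y1 < 1\<close>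
  with \<open>W(y1) < y1 powr (\<alpha> - \<epsilon>)\<close>; iterating submultiplicativity gives
  \<open>S(x v) / I(v) \<le> C x powr (\<beta> + \<epsilon>)\<close> for \<open>x\<close> bounded away from \<open>0\<close> and
  \<open>S(x v) / I(v) \<le> C x powr (\<alpha> - \<epsilon>)\<close> for \<open>x\<close> bounded above. Finally, a simple curve is
  locally connected, so \<open>\<omega>(t0, \<delta>)\<close> contains a neighbourhood of \<open>t0\<close> in \<open>\<Gamma>\<close>; this bounds
  \<open>|t - t0| / |\<tau> - t0|\<close> from below, respectively above, in the two cases of the lemma.
\<close>

definition ratio_bound :: "(real \<Rightarrow> real) \<Rightarrow> (real \<Rightarrow> real) \<Rightarrow> real \<Rightarrow> real \<Rightarrow> real \<Rightarrow> bool" where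
  "ratio_bound S I D x K \<longleftrightarrow>
     (\<forall>u v. 0 < u \<longrightarrow> u \<le> D \<longrightarrow> 0 < v \<longrightarrow> v \<le> D \<longrightarrow> u = x * v \<longrightarrow> S u / I v \<le> K)"

locale envelope =
  fixes S I :: "real \<Rightarrow> real" and D :: real
  assumes inf_pos_le_sup: "\<And>u. 0 < u \<Longrightarrow> u \<le> D \<Longrightarrow> 0 < I u \<and> I u \<le> S u"
begin

abbreviation bound :: "real \<Rightarrow> real \<Rightarrow> bool" where
  "bound \<equiv> ratio_bound S I D"

lemma bound_mono: "bound x K \<Longrightarrow> K \<le> K' \<Longrightarrow> bound x K'"
  unfolding ratio_bound_def by (blast intro: order_trans)

lemma ratio_le_mult_ratio:
  assumes "0 < u" "u \<le> D" "0 < m" "m \<le> D" "0 < v" "v \<le> D"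
  shows "S u / I v \<le> (S u / I m) * (S m / I v)"
proof -
  have "0 < I m" "I m \<le> S m" "0 < I v" "0 \<le> S u"
    using inf_pos_le_sup assms by (auto intro: order_trans less_imp_le)
  then have "S u / I v = (S u / I m) * (I m / I v)" by (simp add: field_simps)
  also have "\<dots> \<le> (S u / I m) * (S m / I v)"
    using \<open>0 < I m\<close> \<open>I m \<le> S m\<close> \<open>0 < I v\<close> \<open>0 \<le> S u\<close>
    by (intro mult_left_mono divide_right_mono) auto
  finally show ?thesis .
qed

lemma ratio_nonneg: "0 < u \<Longrightarrow> u \<le> D \<Longrightarrow> 0 < v \<Longrightarrow> v \<le> D \<Longrightarrow> 0 \<le> S u / I v"
  using inf_pos_le_sup[of u] inf_pos_le_sup[of v] by auto

lemma ratio_le_mult_bounds: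
  assumes "bound x K1" "bound y K2" "0 < y * v" "y * v \<le> D"
    and u: "0 < u" "u \<le> D" and v: "0 < v" "v \<le> D" and uv: "u = x * (y * v)"
  shows "S u / I v \<le> K1 * K2"
proof -
  have m: "0 < y * v" "y * v \<le> D" by fact+
  have "S u / I v \<le> (S u / I (y * v)) * (S (y * v) / I v)"
    by (rule ratio_le_mult_ratio[OF u m v])
  also have "\<dots> \<le> K1 * K2"
  proof -
    have "S u / I (y * v) \<le> K1" "S (y * v) / I v \<le> K2"
      using assms unfolding ratio_bound_def by auto
    then show ?thesis
      using ratio_nonneg[OF u m] ratio_nonneg[OF m v] by (intro mult_mono) auto
  qed
  finally show ?thesis .
qed

lemma bound_mult:
  assumes x: "0 < x" and y: "0 < y" and "bound x K1" "bound y K2"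
  shows "bound (x * y) (K1 * K2)"
  unfolding ratio_bound_def
proof (intro allI impI)
  fix u v assume u: "0 < u" "u \<le> D" and v: "0 < v" "v \<le> D" and uv: "u = x * y * v"
  show "S u / I v \<le> K1 * K2"
  proof (cases "y * v \<le> D")
    case True
    then show ?thesis
      using ratio_le_mult_bounds[OF assms(3,4) _ True u v] y v uv by (simp add: mult.assoc)
  next
    case False
    \<comment> \<open>then \<open>x < 1\<close>, so factor through the radius \<open>x * v\<close> instead\<close>
    have "x * v \<le> D"
    proof (rule ccontr)
      assume "\<not> x * v \<le> D"
      then have "v < x * v" using v by linarith
      then have "1 < x" using v by simp
      then have "y * v < x * (y * v)" using y v by simp
      then show False using False u uv by (simp add: mult.assoc)
    qed
    then show ?thesis
      using ratio_le_mult_bounds[OF assms(4,3) _ _ u v] x v uv by (simp add: mult_ac)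
  qed
qed

lemma bound_power: "0 < x \<Longrightarrow> bound x K \<Longrightarrow> bound (x ^ Suc n) (K ^ Suc n)"
  by (induction n) (auto intro: bound_mult[of x, simplified])

lemma bound_mult_powr:
  assumes "0 < x" "bound x (x powr c)" "0 < y" "bound y (C * y powr c)"
  shows "bound (x * y) (C * (x * y) powr c)"
  using bound_mult[OF assms(1,3,2,4)] assms(1,3) by (simp add: powr_mult mult_ac)

end

locale regular_envelope = envelope +
  assumes regular: "\<exists>\<eta>>0. \<exists>M. \<forall>x. 0 < x \<and> \<bar>x - 1\<bar> < \<eta> \<longrightarrow> bound x M"
begin

text \<open>Every \<open>x \<in> [a, b]\<close> has an \<open>n\<close>-th root close to \<open>1\<close>, for one \<open>n\<close> chosen uniformly.\<close>
lemma bound_on_interval: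
  assumes a: "0 < a"
  shows "\<exists>M. \<forall>x\<in>{a..b}. bound x M"
proof (cases "a \<le> b")
  case False then show ?thesis by auto
next
  case True
  obtain \<eta> M where \<eta>: "\<eta> > 0" and M: "\<And>x. 0 < x \<Longrightarrow> \<bar>x - 1\<bar> < \<eta> \<Longrightarrow> bound x M"
    using regular by blast
  have "\<forall>\<^sub>F n in sequentially. \<bar>root n a - 1\<bar> < \<eta>" "\<forall>\<^sub>F n in sequentially. \<bar>root n b - 1\<bar> < \<eta>"
    using LIMSEQ_root_const[of a] LIMSEQ_root_const[of b] a True \<eta>
    unfolding tendsto_iff dist_real_def by auto
  then obtain k where a_root: "\<bar>root (Suc k) a - 1\<bar> < \<eta>" and b_root: "\<bar>root (Suc k) b - 1\<bar> < \<eta>"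
    by (metis (no_types, lifting) eventually_conj eventually_sequentially le_add2 plus_1_eq_Suc)
  show ?thesis
  proof (intro exI ballI)
    fix x assume x: "x \<in> {a..b}"
    then have "0 < x" using a by auto
    have "root (Suc k) a \<le> root (Suc k) x" "root (Suc k) x \<le> root (Suc k) b"
      using x by (auto intro: real_root_le_mono)
    then have "\<bar>root (Suc k) x - 1\<bar> < \<eta>" using a_root b_root by linarith
    then have "bound (root (Suc k) x) M" using M \<open>0 < x\<close> by simp
    moreover have "0 < root (Suc k) x" using \<open>0 < x\<close> by simp
    moreover have "root (Suc k) x ^ Suc k = x"
      by (rule real_root_pow_pos2) (use \<open>0 < x\<close> in auto)
    ultimately show "bound x (M ^ Suc k)" by (metis bound_power)
  qed
qed

lemma bound_powr_on_interval:
  assumes a: "0 < a"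
  shows "\<exists>C>0. \<forall>x\<in>{a..b}. bound x (C * x powr c)"
proof -
  obtain M where M: "\<And>x. x \<in> {a..b} \<Longrightarrow> bound x M" using bound_on_interval[OF a] by blast
  define m where "m = min (a powr c) (b powr c)"
  define C where "C = max 1 M / m"
  show ?thesis
  proof (cases "a \<le> b")
    case False then show ?thesis by (intro exI[of _ 1]) auto
  next
    case True
    then have m: "0 < m" using a by (simp add: m_def)
    have "bound x (C * x powr c)" if x: "x \<in> {a..b}" for x
    proof -
      have "m \<le> x powr c"
        using x a powr_mono2[of c a x] powr_mono2'[of c x b] unfolding m_def
        by (cases "c \<ge> 0") auto
      then have "max 1 M * 1 \<le> max 1 M * (x powr c / m)"
        using m by (intro mult_left_mono) auto
      then have "max 1 M \<le> C * x powr c" by (simp add: C_def)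
      then show ?thesis by (intro bound_mono[OF M[OF x]]) simp
    qed
    then show ?thesis using m by (intro exI[of _ C]) (auto simp: C_def)
  qed
qed

lemma bound_powr_above:
  assumes x1: "1 < x1" "bound x1 (x1 powr c)" and x0: "0 < x0"
  shows "\<exists>C>0. \<forall>x\<ge>x0. bound x (C * x powr c)"
proof -
  define a where "a = min x0 1"
  have a: "0 < a" "a \<le> 1" "a \<le> x0" using x0 by (auto simp: a_def)
  obtain C where C: "C > 0" "\<And>x. x \<in> {a..x1} \<Longrightarrow> bound x (C * x powr c)"
    using bound_powr_on_interval[OF a(1)] by blast
  have powers: "\<forall>x\<in>{a..x1 ^ Suc n}. bound x (C * x powr c)" for n
  proof (induction n)
    case 0 then show ?case using C by simp
  next
    case (Suc n)
    show ?case
    proof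
      fix x assume x: "x \<in> {a..x1 ^ Suc (Suc n)}"
      show "bound x (C * x powr c)"
      proof (cases "x \<le> x1")
        case True then show ?thesis using C x by auto
      next
        case False
        then have "1 < x / x1" using x1 by simp
        then have "a \<le> x / x1" using a by linarith
        moreover have "x / x1 \<le> x1 ^ Suc n" using x x1 by (simp add: field_simps)
        ultimately have "x / x1 \<in> {a..x1 ^ Suc n}" by simp
        then have "bound (x1 * (x / x1)) (C * (x1 * (x / x1)) powr c)"
          using Suc x1 a by (intro bound_mult_powr) auto
        then show ?thesis using x1 by simp
      qed
    qed
  qed
  show ?thesis
  proof (intro exI[of _ C] conjI allI impI C(1))
    fix x assume "x0 \<le> x"
    obtain n where "x < x1 ^ n" using real_arch_pow[OF x1(1)] by blast
    moreover have "x1 ^ n \<le> x1 ^ Suc n" using x1 by (intro power_increasing) auto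
    ultimately have "x \<le> x1 ^ Suc n" by linarith
    then show "bound x (C * x powr c)" using powers[of n] \<open>x0 \<le> x\<close> a by auto
  qed
qed

lemma bound_powr_below:
  assumes x1: "0 < x1" "x1 < 1" "bound x1 (x1 powr c)" and x0: "0 < x0"
  shows "\<exists>C>0. \<forall>x. 0 < x \<and> x \<le> x0 \<longrightarrow> bound x (C * x powr c)"
proof -
  define A where "A = max x0 1"
  have A: "1 \<le> A" "x0 \<le> A" by (auto simp: A_def)
  obtain C where C: "C > 0" "\<And>x. x \<in> {x1..A} \<Longrightarrow> bound x (C * x powr c)"
    using bound_powr_on_interval[OF x1(1)] by blast
  have powers: "\<forall>x\<in>{x1 ^ Suc n..A}. bound x (C * x powr c)" for n
  proof (induction n)
    case 0 then show ?case using C by simp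
  next
    case (Suc n)
    show ?case
    proof
      fix x assume x: "x \<in> {x1 ^ Suc (Suc n)..A}"
      show "bound x (C * x powr c)"
      proof (cases "x1 \<le> x")
        case True then show ?thesis using C x by auto
      next
        case False
        have "0 < x" using x x1 by (meson atLeastAtMost_iff less_le_trans zero_less_power)
        have "x / x1 < 1" using False x1 by simp
        moreover have "x1 ^ Suc n \<le> x / x1" using x x1 by (simp add: field_simps)
        ultimately have "x / x1 \<in> {x1 ^ Suc n..A}" using A(1) by simp
        then have "bound (x1 * (x / x1)) (C * (x1 * (x / x1)) powr c)"
          using Suc x1 \<open>0 < x\<close> by (intro bound_mult_powr) auto
        then show ?thesis using x1 by simp
      qed
    qed
  qed
  show ?thesis
  proof (intro exI[of _ C] conjI allI impI C(1))
    fix x assume x: "0 < x \<and> x \<le> x0"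
    obtain n where "x1 ^ n < x" using real_arch_pow_inv[of x x1] x x1 by blast
    moreover have "x1 ^ Suc n \<le> x1 ^ n" using x1 by (simp add: power_decreasing)
    ultimately have "x1 ^ Suc n \<le> x" by linarith
    then show "bound x (C * x powr c)" using powers[of n] x A by auto
  qed
qed

end

lemma ln_div_ln_less_imp_less_powr:
  fixes r x c :: real
  assumes "0 < r" "1 < x" "ln r / ln x < c"
  shows "r < x powr c"
proof -
  have "0 < ln x" using assms(2) by (rule ln_gt_zero)
  then have "ln r < c * ln x" using assms(3) by (simp add: pos_divide_less_eq)
  then have "exp (ln r) < exp (c * ln x)" by simp
  then show ?thesis using assms(1,2) by (simp add: powr_def)
qed

lemma ln_div_ln_greater_imp_less_powr:
  fixes r x c :: real
  assumes "0 < r" "0 < x" "x < 1" "c < ln r / ln x"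
  shows "r < x powr c"
proof -
  have "ln x < 0" using assms(2,3) by (rule ln_less_zero)
  then have "ln r < c * ln x" using assms(4) by (simp add: neg_less_divide_eq)
  then have "exp (ln r) < exp (c * ln x)" by simp
  then show ?thesis using assms(1,2) by (simp add: powr_def)
qed

lemma beta_idx_witness:
  fixes \<rho> :: "real \<Rightarrow> ereal"
  assumes \<rho>: "\<And>x. 1 < x \<Longrightarrow> 0 < \<rho> x \<and> \<rho> x < \<infinity>" and "0 < \<epsilon>"
  shows "\<exists>x>1. \<rho> x < ereal (x powr (real_of_ereal (beta_idx \<rho>) + \<epsilon>))"
proof -
  define c where "c = real_of_ereal (beta_idx \<rho>) + \<epsilon>"
  define r where "r x = real_of_ereal (\<rho> x)" for x
  have \<rho>_eq: "\<rho> x = ereal (r x) \<and> 0 < r x" if "1 < x" for x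
    using \<rho>[OF that] by (cases "\<rho> x") (auto simp: r_def)
  have index_term: "(if \<rho> x = \<infinity> then \<infinity> else ereal (ln (real_of_ereal (\<rho> x)) / ln x))
      = ereal (ln (r x) / ln x)" if "1 < x" for x
    using \<rho>[OF that] by (simp add: r_def)
  have "beta_idx \<rho> \<le> ereal (ln (r 2) / ln 2)"
    unfolding beta_idx_def by (rule INF_lower2[of 2]) (use index_term[of 2] in auto)
  then have "beta_idx \<rho> < ereal c"
    using \<open>0 < \<epsilon>\<close> unfolding c_def by (cases "beta_idx \<rho>") auto
  then obtain x where x: "1 < x" "ln (r x) / ln x < c"
    unfolding beta_idx_def INF_less_iff using index_term by auto
  then have "r x < x powr c" using \<rho>_eq[OF x(1)] by (intro ln_div_ln_less_imp_less_powr) auto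
  then show ?thesis using x(1) \<rho>_eq[OF x(1)] unfolding c_def by auto
qed

lemma alpha_idx_witness:
  fixes \<rho> :: "real \<Rightarrow> ereal"
  assumes \<rho>: "\<And>x. 0 < x \<Longrightarrow> x < 1 \<Longrightarrow> 0 < \<rho> x \<and> \<rho> x < \<infinity>" and "0 < \<epsilon>"
  shows "\<exists>x. 0 < x \<and> x < 1 \<and> \<rho> x < ereal (x powr (real_of_ereal (alpha_idx \<rho>) - \<epsilon>))"
proof -
  define c where "c = real_of_ereal (alpha_idx \<rho>) - \<epsilon>"
  define r where "r x = real_of_ereal (\<rho> x)" for x
  have \<rho>_eq: "\<rho> x = ereal (r x) \<and> 0 < r x" if "0 < x" "x < 1" for x
    using \<rho>[OF that] by (cases "\<rho> x") (auto simp: r_def)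
  have index_term: "(if \<rho> x = \<infinity> then -\<infinity> else ereal (ln (real_of_ereal (\<rho> x)) / ln x))
      = ereal (ln (r x) / ln x)" if "0 < x" "x < 1" for x
    using \<rho>[OF that] by (simp add: r_def)
  have "ereal (ln (r (1/2)) / ln (1/2)) \<le> alpha_idx \<rho>"
    unfolding alpha_idx_def by (rule SUP_upper2[of "1/2"]) (use index_term[of "1/2"] in auto)
  then have "ereal c < alpha_idx \<rho>"
    using \<open>0 < \<epsilon>\<close> unfolding c_def by (cases "alpha_idx \<rho>") auto
  then obtain x where x: "0 < x" "x < 1" "c < ln (r x) / ln x"
    unfolding alpha_idx_def less_SUP_iff using index_term by auto
  then have "r x < x powr c" using \<rho>_eq[OF x(1,2)] by (intro ln_div_ln_greater_imp_less_powr) auto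
  then show ?thesis using x(1,2) \<rho>_eq[OF x(1,2)] unfolding c_def by auto
qed

lemma locally_connected_simple_path_image:
  fixes g :: "real \<Rightarrow> complex"
  assumes "simple_path g"
  shows "locally connected (path_image g)"
proof (cases "pathfinish g = pathstart g")
  case True
  have "path_image g homeomorphic sphere (0::complex) 1"
    by (rule homeomorphic_simple_path_image_circle[OF assms True]) simp
  then show ?thesis
    by (simp add: homeomorphic_locally[OF _ homeomorphic_connectedness] locally_connected_sphere)
next
  case False
  then have "arc g" using assms simple_path_cases by blast
  then have "path_image g homeomorphic {0..1::real}"
    by (rule homeomorphic_arc_image_interval) simp
  then show ?thesis
    by (simp add: homeomorphic_locally[OF _ homeomorphic_connectedness] convex_imp_locally_connected)
qed

lemma omega_arc_subset: "\<tau> \<in> omega_arc \<Gamma> t0 \<delta> \<Longrightarrow> \<tau> \<in> \<Gamma> \<and> cmod (\<tau> - t0) < \<delta>"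
  using connected_component_subset unfolding omega_arc_def by fastforce

lemma t0_in_omega_arc: "t0 \<in> \<Gamma> \<Longrightarrow> 0 < \<delta> \<Longrightarrow> t0 \<in> omega_arc \<Gamma> t0 \<delta>"
  by (simp add: omega_arc_def)

lemma omega_arc_contains_ball:
  assumes "locally connected \<Gamma>" "t0 \<in> \<Gamma>" "0 < \<delta>"
  shows "\<exists>r>0. \<forall>t\<in>\<Gamma>. cmod (t - t0) < r \<longrightarrow> t \<in> omega_arc \<Gamma> t0 \<delta>"
proof -
  have "{\<tau> \<in> \<Gamma>. cmod (\<tau> - t0) < \<delta>} = \<Gamma> \<inter> ball t0 \<delta>"
    by (auto simp: dist_norm norm_minus_commute)
  then have "openin (top_of_set \<Gamma>) {\<tau> \<in> \<Gamma>. cmod (\<tau> - t0) < \<delta>}"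
    by (simp add: openin_open_Int)
  moreover have "t0 \<in> {\<tau> \<in> \<Gamma>. cmod (\<tau> - t0) < \<delta>}" using assms(2,3) by simp
  ultimately have "openin (top_of_set \<Gamma>) (omega_arc \<Gamma> t0 \<delta>)"
    using assms(1) unfolding locally_connected_open_connected_component omega_arc_def by blast
  moreover have "t0 \<in> omega_arc \<Gamma> t0 \<delta>"
    using assms(2,3) by (rule t0_in_omega_arc)
  ultimately obtain r where "0 < r" "ball t0 r \<inter> \<Gamma> \<subseteq> omega_arc \<Gamma> t0 \<delta>"
    unfolding openin_contains_ball by blast
  then show ?thesis
    by (intro exI[of _ r]) (auto simp: dist_norm norm_minus_commute)
qed

definition circle_sup :: "complex set \<Rightarrow> complex \<Rightarrow> (complex \<Rightarrow> real) \<Rightarrow> real \<Rightarrow> real" where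
  "circle_sup \<Gamma> t0 w r = Sup (w ` circ_pts \<Gamma> t0 r)"

definition circle_inf :: "complex set \<Rightarrow> complex \<Rightarrow> (complex \<Rightarrow> real) \<Rightarrow> real \<Rightarrow> real" where
  "circle_inf \<Gamma> t0 w r = Inf (w ` circ_pts \<Gamma> t0 r)"

lemma Wfun_ge:
  assumes "0 < x" "0 < u" "u \<le> dmax \<Gamma> t0" "0 < v" "v \<le> dmax \<Gamma> t0" "u = x * v"
  shows "ereal (circle_sup \<Gamma> t0 w u / circle_inf \<Gamma> t0 w v) \<le> Wfun \<Gamma> t0 w x"
proof (cases "x \<le> 1")
  case True
  then show ?thesis unfolding Wfun_def circle_sup_def circle_inf_def
    by (simp, intro SUP_upper2[of v]) (use assms in auto)
next
  case False
  have "u / x = v" using assms by simp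
  then show ?thesis unfolding Wfun_def circle_sup_def circle_inf_def using False
    by (simp, intro SUP_upper2[of u]) (use assms in auto)
qed

lemma Wfun_le_iff:
  assumes x: "0 < x"
  shows "Wfun \<Gamma> t0 w x \<le> ereal K \<longleftrightarrow>
    ratio_bound (circle_sup \<Gamma> t0 w) (circle_inf \<Gamma> t0 w) (dmax \<Gamma> t0) x K"
proof
  assume "Wfun \<Gamma> t0 w x \<le> ereal K"
  then show "ratio_bound (circle_sup \<Gamma> t0 w) (circle_inf \<Gamma> t0 w) (dmax \<Gamma> t0) x K"
    unfolding ratio_bound_def using Wfun_ge[OF x] by (metis ereal_less_eq(3) order_trans)
next
  assume bound: "ratio_bound (circle_sup \<Gamma> t0 w) (circle_inf \<Gamma> t0 w) (dmax \<Gamma> t0) x K"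
  show "Wfun \<Gamma> t0 w x \<le> ereal K"
  proof (cases "x \<le> 1")
    case True
    have "circle_sup \<Gamma> t0 w (x * R) / circle_inf \<Gamma> t0 w R \<le> K" if "0 < R" "R \<le> dmax \<Gamma> t0" for R
      using bound that x True mult_left_le_one_le[of R x]
      unfolding ratio_bound_def by (metis less_eq_real_def mult_pos_pos order_trans)
    then show ?thesis
      using True unfolding Wfun_def circle_sup_def circle_inf_def by (auto intro: SUP_least)
  next
    case False
    have "circle_sup \<Gamma> t0 w R / circle_inf \<Gamma> t0 w (R / x) \<le> K" if "0 < R" "R \<le> dmax \<Gamma> t0" for R
    proof -
      have "R / x \<le> R" using False that by (simp add: field_simps)
      moreover have "R = x * (R / x)" using x by simp
      ultimately show ?thesis
        using bound that x unfolding ratio_bound_def by (metis divide_pos_pos order_trans)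
    qed
    then show ?thesis
      using False unfolding Wfun_def circle_sup_def circle_inf_def by (auto intro: SUP_least)
  qed
qed

lemma dmax_ge:
  assumes "compact \<Gamma>" "\<tau> \<in> \<Gamma>"
  shows "cmod (\<tau> - t0) \<le> dmax \<Gamma> t0"
proof -
  have "compact ((\<lambda>\<tau>. cmod (\<tau> - t0)) ` \<Gamma>)"
    using assms(1) by (intro compact_continuous_image continuous_intros)
  then show ?thesis
    unfolding dmax_def using assms(2) by (intro cSup_upper bounded_imp_bdd_above compact_imp_bounded) auto
qed

lemma circ_pts_nonempty:
  assumes "compact \<Gamma>" "connected \<Gamma>" "t0 \<in> \<Gamma>" "0 \<le> R" "R \<le> dmax \<Gamma> t0"
  shows "circ_pts \<Gamma> t0 R \<noteq> {}"
proof -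
  define f where "f \<tau> = cmod (\<tau> - t0)" for \<tau>
  have "continuous_on \<Gamma> f" unfolding f_def by (intro continuous_intros)
  then have "compact (f ` \<Gamma>)" "connected (f ` \<Gamma>)"
    using assms(1,2) by (auto intro: compact_continuous_image connected_continuous_image)
  then have "dmax \<Gamma> t0 \<in> f ` \<Gamma>"
    unfolding dmax_def f_def[symmetric] using assms(3) by (intro closed_contains_Sup compact_imp_closed bounded_imp_bdd_above compact_imp_bounded) auto
  moreover have "0 \<in> f ` \<Gamma>" using assms(3) by (force simp: f_def)
  ultimately have "R \<in> f ` \<Gamma>"
    using \<open>connected (f ` \<Gamma>)\<close> assms(4,5) unfolding connected_iff_interval by blast
  then show ?thesis by (auto simp: circ_pts_def f_def)
qed

lemma compact_circ_pts:
  assumes "compact \<Gamma>"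
  shows "compact (circ_pts \<Gamma> t0 R)"
proof -
  have "circ_pts \<Gamma> t0 R = \<Gamma> \<inter> sphere t0 R"
    by (auto simp: circ_pts_def dist_norm norm_minus_commute)
  then show ?thesis using assms by auto
qed

locale weighted_curve =
  fixes \<Gamma> :: "complex set" and t0 :: complex and w :: "complex \<Rightarrow> real"
  assumes compact_curve: "compact \<Gamma>" and connected_curve: "connected \<Gamma>" and t0_in: "t0 \<in> \<Gamma>"
    and continuous_weight: "continuous_on (\<Gamma> - {t0}) w"
    and weight_pos: "\<And>\<tau>. \<tau> \<in> \<Gamma> \<Longrightarrow> \<tau> \<noteq> t0 \<Longrightarrow> 0 < w \<tau>"
begin

lemma circle_inf_sup:
  assumes "0 < u" "u \<le> dmax \<Gamma> t0"
  shows "0 < circle_inf \<Gamma> t0 w u"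
    and "\<And>\<tau>. \<tau> \<in> circ_pts \<Gamma> t0 u \<Longrightarrow> circle_inf \<Gamma> t0 w u \<le> w \<tau> \<and> w \<tau> \<le> circle_sup \<Gamma> t0 w u"
proof -
  let ?C = "circ_pts \<Gamma> t0 u"
  have C: "compact ?C" "?C \<noteq> {}" "?C \<subseteq> \<Gamma> - {t0}"
    using compact_circ_pts circ_pts_nonempty compact_curve connected_curve t0_in assms
    by (auto simp: circ_pts_def)
  then have cont: "continuous_on ?C w" using continuous_weight continuous_on_subset by blast
  obtain a where a: "a \<in> ?C" "\<And>\<tau>. \<tau> \<in> ?C \<Longrightarrow> w a \<le> w \<tau>"
    using continuous_attains_inf[OF C(1,2) cont] by blast
  obtain b where b: "b \<in> ?C" "\<And>\<tau>. \<tau> \<in> ?C \<Longrightarrow> w \<tau> \<le> w b"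
    using continuous_attains_sup[OF C(1,2) cont] by blast
  have inf: "circle_inf \<Gamma> t0 w u = w a"
    unfolding circle_inf_def using a by (intro cInf_eq_minimum) auto
  have sup: "circle_sup \<Gamma> t0 w u = w b"
    unfolding circle_sup_def using b by (intro cSup_eq_maximum) auto
  show "0 < circle_inf \<Gamma> t0 w u" using inf a(1) C(3) weight_pos by auto
  show "circle_inf \<Gamma> t0 w u \<le> w \<tau> \<and> w \<tau> \<le> circle_sup \<Gamma> t0 w u" if "\<tau> \<in> ?C" for \<tau>
    using inf sup a b that by auto
qed

sublocale envelope "circle_sup \<Gamma> t0 w" "circle_inf \<Gamma> t0 w" "dmax \<Gamma> t0"
proof
  fix u assume u: "0 < u" "u \<le> dmax \<Gamma> t0"
  then obtain \<tau> where "\<tau> \<in> circ_pts \<Gamma> t0 u"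
    using circ_pts_nonempty compact_curve connected_curve t0_in by fastforce
  then show "0 < circle_inf \<Gamma> t0 w u \<and> circle_inf \<Gamma> t0 w u \<le> circle_sup \<Gamma> t0 w u"
    using circle_inf_sup[OF u] by force
qed

lemma weight_ratio_le:
  assumes t: "t \<in> \<Gamma>" "t \<noteq> t0" and \<tau>: "\<tau> \<in> \<Gamma>" "\<tau> \<noteq> t0"
    and K: "bound (cmod (t - t0) / cmod (\<tau> - t0)) K"
  shows "w t / w \<tau> \<le> K"
proof -
  define r s where "r = cmod (t - t0)" and "s = cmod (\<tau> - t0)"
  have r: "0 < r" "r \<le> dmax \<Gamma> t0" and s: "0 < s" "s \<le> dmax \<Gamma> t0"
    using t \<tau> dmax_ge[OF compact_curve] by (auto simp: r_def s_def)
  have "w t \<le> circle_sup \<Gamma> t0 w r" "circle_inf \<Gamma> t0 w s \<le> w \<tau>"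
    using circle_inf_sup(2)[OF r, of t] circle_inf_sup(2)[OF s, of \<tau>] t \<tau>
    by (auto simp: circ_pts_def r_def s_def)
  moreover have "0 < circle_inf \<Gamma> t0 w s" "0 \<le> w t"
    using circle_inf_sup(1)[OF s] weight_pos[OF t] by auto
  ultimately have "w t / w \<tau> \<le> circle_sup \<Gamma> t0 w r / circle_inf \<Gamma> t0 w s"
    by (intro frac_le) auto
  also have "\<dots> \<le> K"
  proof -
    have "r = (r / s) * s" using s by simp
    then show ?thesis using K[folded r_def s_def, unfolded ratio_bound_def] r s by blast
  qed
  finally show ?thesis .
qed

lemma Wfun_pos:
  assumes "0 < dmax \<Gamma> t0" "0 < x"
  shows "0 < Wfun \<Gamma> t0 w x"
proof -
  define v where "v = min (dmax \<Gamma> t0) (dmax \<Gamma> t0 / x)"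
  have v: "0 < v" "v \<le> dmax \<Gamma> t0" using assms by (auto simp: v_def)
  have "x * v \<le> x * (dmax \<Gamma> t0 / x)" using assms by (intro mult_left_mono) (auto simp: v_def)
  then have xv: "0 < x * v" "x * v \<le> dmax \<Gamma> t0" using assms v by auto
  have "0 < circle_sup \<Gamma> t0 w (x * v) / circle_inf \<Gamma> t0 w v"
    using inf_pos_le_sup[OF xv] inf_pos_le_sup[OF v] by auto
  also have "ereal \<dots> \<le> Wfun \<Gamma> t0 w x" by (rule Wfun_ge[OF assms(2) xv v refl])
  finally show ?thesis by (simp add: zero_ereal_def)
qed

end

locale regular_weighted_curve = weighted_curve +
  assumes regular_Wfun: "regular_fun (Wfun \<Gamma> t0 w)"
begin

sublocale regular_envelope "circle_sup \<Gamma> t0 w" "circle_inf \<Gamma> t0 w" "dmax \<Gamma> t0"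
proof
  obtain \<eta> M where "0 < \<eta>" "\<And>x. 0 < x \<Longrightarrow> \<bar>x - 1\<bar> < \<eta> \<Longrightarrow> Wfun \<Gamma> t0 w x \<le> ereal M"
    using regular_Wfun unfolding regular_fun_def by blast
  then show "\<exists>\<eta>>0. \<exists>M. \<forall>x. 0 < x \<and> \<bar>x - 1\<bar> < \<eta> \<longrightarrow> bound x M"
    using Wfun_le_iff by blast
qed

lemma Wfun_finite:
  assumes "0 < x"
  shows "Wfun \<Gamma> t0 w x < \<infinity>"
proof -
  obtain M where "bound x M" using bound_on_interval[OF assms, of x] by auto
  then have "Wfun \<Gamma> t0 w x \<le> ereal M" using Wfun_le_iff[OF assms] by blast
  then show ?thesis by (auto simp: less_le)
qed

lemma weight_ratio_powr_above:
  assumes "1 < x1" "Wfun \<Gamma> t0 w x1 \<le> ereal (x1 powr c)" "0 < r"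
  shows "\<exists>C>0. \<forall>t\<in>\<Gamma> - {t0}. \<forall>\<tau>\<in>\<Gamma> - {t0}. r \<le> cmod (t - t0) / cmod (\<tau> - t0) \<longrightarrow>
           w t / w \<tau> \<le> C * cmod ((t - t0) / (\<tau> - t0)) powr c"
proof -
  have "bound x1 (x1 powr c)" using assms(1,2) Wfun_le_iff[of x1 \<Gamma> t0 w] by simp
  then obtain C where "0 < C" "\<And>x. r \<le> x \<Longrightarrow> bound x (C * x powr c)"
    using bound_powr_above assms(1,3) by blast
  then show ?thesis by (auto intro!: exI[of _ C] weight_ratio_le simp: norm_divide)
qed

lemma weight_ratio_powr_below:
  assumes "0 < x1" "x1 < 1" "Wfun \<Gamma> t0 w x1 \<le> ereal (x1 powr c)" "0 < R"
  shows "\<exists>C>0. \<forall>t\<in>\<Gamma> - {t0}. \<forall>\<tau>\<in>\<Gamma> - {t0}. cmod (t - t0) / cmod (\<tau> - t0) \<le> R \<longrightarrow>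
           w t / w \<tau> \<le> C * cmod ((t - t0) / (\<tau> - t0)) powr c"
proof -
  have "bound x1 (x1 powr c)" using assms(1,3) Wfun_le_iff[of x1 \<Gamma> t0 w] by simp
  then obtain C where "0 < C" "\<And>x. 0 < x \<and> x \<le> R \<Longrightarrow> bound x (C * x powr c)"
    using bound_powr_below assms(1,2,4) by blast
  then show ?thesis by (auto intro!: exI[of _ C] weight_ratio_le simp: norm_divide)
qed

end

theorem lemma3p2:
  fixes g :: "real \<Rightarrow> complex" and t0 :: complex and w :: "complex \<Rightarrow> real"
    and \<epsilon> \<delta> :: real
  assumes "carleson_curve g"
    and "t0 \<in> path_image g"
    and "continuous_on (path_image g - {t0}) w"
    and "\<forall>\<tau>\<in>path_image g - {t0}. w \<tau> > 0"
    and "regular_fun (Wfun (path_image g) t0 w)"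
    and "\<epsilon> > 0" and "0 < \<delta>" and "\<delta> < dmax (path_image g) t0"
  shows "\<exists>C1>0. \<exists>C2>0.
    (\<forall>t\<in>path_image g - omega_arc (path_image g) t0 \<delta>.
       \<forall>\<tau>\<in>omega_arc (path_image g) t0 \<delta> - {t0}.
         w t / w \<tau> \<le> C1 * cmod ((t - t0) / (\<tau> - t0))
                     powr (real_of_ereal (beta_idx (Wfun (path_image g) t0 w)) + \<epsilon>)) \<and>
    (\<forall>t\<in>omega_arc (path_image g) t0 \<delta> - {t0}.
       \<forall>\<tau>\<in>path_image g - omega_arc (path_image g) t0 \<delta>.
         w t / w \<tau> \<le> C2 * cmod ((t - t0) / (\<tau> - t0))
                     powr (real_of_ereal (alpha_idx (Wfun (path_image g) t0 w)) - \<epsilon>))"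
proof -
  let ?\<Gamma> = "path_image g" and ?W = "Wfun (path_image g) t0 w"
  let ?\<omega> = "omega_arc (path_image g) t0 \<delta>"
  let ?\<beta> = "real_of_ereal (beta_idx ?W) + \<epsilon>" and ?\<alpha> = "real_of_ereal (alpha_idx ?W) - \<epsilon>"
  have simple: "simple_path g" using assms(1) by (simp add: carleson_curve_def)
  interpret regular_weighted_curve ?\<Gamma> t0 w
    using assms(2-5) simple_path_imp_path[OF simple]
    by unfold_locales (auto simp: compact_path_image connected_path_image)
  have W: "0 < ?W x \<and> ?W x < \<infinity>" if "0 < x" for x
    using Wfun_pos Wfun_finite that assms(7,8) by fastforce
  obtain x1 where "1 < x1" "?W x1 < ereal (x1 powr ?\<beta>)"
    using beta_idx_witness[of ?W \<epsilon>] W assms(6) by auto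
  moreover obtain y1 where "0 < y1" "y1 < 1" "?W y1 < ereal (y1 powr ?\<alpha>)"
    using alpha_idx_witness[of ?W \<epsilon>] W assms(6) by auto
  moreover obtain r where r: "0 < r" "\<And>t. t \<in> ?\<Gamma> \<Longrightarrow> cmod (t - t0) < r \<Longrightarrow> t \<in> ?\<omega>"
    using omega_arc_contains_ball[OF locally_connected_simple_path_image[OF simple] assms(2,7)] by blast
  ultimately obtain C1 C2 where "0 < C1" "0 < C2"
    and C1: "\<And>t \<tau>. t \<in> ?\<Gamma> - {t0} \<Longrightarrow> \<tau> \<in> ?\<Gamma> - {t0} \<Longrightarrow> r / \<delta> \<le> cmod (t - t0) / cmod (\<tau> - t0) \<Longrightarrow>
           w t / w \<tau> \<le> C1 * cmod ((t - t0) / (\<tau> - t0)) powr ?\<beta>"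
    and C2: "\<And>t \<tau>. t \<in> ?\<Gamma> - {t0} \<Longrightarrow> \<tau> \<in> ?\<Gamma> - {t0} \<Longrightarrow> cmod (t - t0) / cmod (\<tau> - t0) \<le> \<delta> / r \<Longrightarrow>
           w t / w \<tau> \<le> C2 * cmod ((t - t0) / (\<tau> - t0)) powr ?\<alpha>"
    using weight_ratio_powr_above[of x1 _ "r / \<delta>"] weight_ratio_powr_below[of y1 _ "\<delta> / r"] assms(7)
    by (metis divide_pos_pos less_imp_le)
  have far: "r \<le> cmod (t - t0)" if "t \<in> ?\<Gamma> - ?\<omega>" for t
    using r(2) that by force
  have near: "\<tau> \<in> ?\<Gamma> \<and> cmod (\<tau> - t0) \<le> \<delta>" if "\<tau> \<in> ?\<omega>" for \<tau>
    using omega_arc_subset[OF that] by simp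
  have "t0 \<in> ?\<omega>" using assms(2,7) by (rule t0_in_omega_arc)
  show ?thesis
  proof (intro exI conjI ballI)
    fix t \<tau> assume "t \<in> ?\<Gamma> - ?\<omega>" "\<tau> \<in> ?\<omega> - {t0}"
    then show "w t / w \<tau> \<le> C1 * cmod ((t - t0) / (\<tau> - t0)) powr ?\<beta>"
      using far near r(1) \<open>t0 \<in> ?\<omega>\<close> by (intro C1) (auto intro!: frac_le)
  next
    fix t \<tau> assume "t \<in> ?\<omega> - {t0}" "\<tau> \<in> ?\<Gamma> - ?\<omega>"
    then show "w t / w \<tau> \<le> C2 * cmod ((t - t0) / (\<tau> - t0)) powr ?\<alpha>"
      using far near r(1) \<open>t0 \<in> ?\<omega>\<close> assms(7) by (intro C2) (auto intro!: frac_le)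
  qed (use \<open>0 < C1\<close> \<open>0 < C2\<close> in auto)
qed

end
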